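(* Let $S=s_1,\ldots,s_n$ be a sequence of positive real numbers, $\gamma>0$, $k$ a positive integer and $\epsilon>0$. Let $(L^*,\alpha^*,\beta^* )$ be an optimal solution of $\textsc{Exp}$ for $S,\gamma,k$, let $g=(\prod_{i=1}^n s_i)^{1/n}$ and $\psi=n\log g$. Let $(L,\alpha,\beta)$ be the output of $\textit{ApproxExp}(S,\gamma,k,\epsilon)$. Then \[ \mathrm{score}_{\exp}(L,S;\alpha,\beta,\gamma)-\psi\le(1+\epsilon)\big(\mathrm{score}_{\exp}(L^*,S;\alpha^*,\beta^*,\gamma)-\psi\big). \] Moreover, if $g\ge1$, then $\mathrm{score}_{\exp}(L,S;\alpha,\beta,\gamma)\le(1+\epsilon)\,\mathrm{score}_{\exp}(L^*,S;\alpha^*,\beta^*,\gamma)$.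
   Context: A level sequence is $L=\ell_1,\ldots,\ell_n$ of integers with $0\le\ell_i\le k$; set $\ell_0=0$. The penalty is $\mathrm{pen}(x,y)=\max(y-x,0)\,\gamma\log n$; $p_{\exp}(s;\lambda)=\lambda e^{-\lambda s}$; for $\alpha\ge1$, $\beta>0$, $\mathrm{score}_{\exp}(L,S;\alpha,\beta,\gamma)=\sum_{i=1}^n\big[-\log p_{\exp}(s_i;\beta\alpha^{\ell_i})+\mathrm{pen}(\ell_{i-1},\ell_i)\big]$. Problem $\textsc{Exp}$: given $S,\gamma,k$, find $L$ and parameters $\alpha$ (the paper uses $\alpha>1$) and $\beta>0$ minimizing this score. $\textit{Viterbi}(S,\alpha,\beta,\gamma,k,p_{\exp})$ returns a level sequence minimizing the score for fixed $\alpha,\beta$. Algorithm $\textit{ExpAlpha}(S,\alpha,\gamma,k,\epsilon)$: let $\mu=\frac1n\sum_i s_i$ and $\beta=1/\mu$; while $\beta\ge1/(\alpha^k\mu)$: run $\textit{Viterbi}(S,\alpha,\beta,\gamma,k,p_{\exp})$ and set $\beta\leftarrow\beta/(1+\epsilon)$; return the best tested $(L,\beta)$. Algorithm $\textit{ApproxExp}(S,\gamma,k,\epsilon)$: let $\alpha=(\max_i s_i)/(\min_i s_i)$ and $c=(1+\epsilon)^{1/(2k)}$; while $\alpha\ge1$: run $\textit{ExpAlpha}(S,\alpha,\gamma,k,\epsilon/2)$ and set $\alpha\leftarrow\alpha/c$. Return the observed triple $(L,\alpha,\beta)$ with the smallest score. *)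

theory Defs
  imports Complex_Main
begin

text \<open>A sequence S = s_1..s_n is a function nat => real on indices 1..n;
  a level sequence L is a function nat => nat whose values on 1..n lie in 0..k.
  The convention l_0 = 0 is built into the score via prev_level.\<close>

definition level_seq :: "nat \<Rightarrow> nat \<Rightarrow> (nat \<Rightarrow> nat) \<Rightarrow> bool" where
  "level_seq n k L \<longleftrightarrow> (\<forall>i\<in>{1..n}. L i \<le> k)"

definition prev_level :: "(nat \<Rightarrow> nat) \<Rightarrow> nat \<Rightarrow> nat" where
  "prev_level L i = (if i = 1 then 0 else L (i - 1))"

definition pen :: "nat \<Rightarrow> real \<Rightarrow> nat \<Rightarrow> nat \<Rightarrow> real" where
  "pen n \<gamma> x y = max (real y - real x) 0 * \<gamma> * ln (real n)"

definition p_exp :: "real \<Rightarrow> real \<Rightarrow> real" where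
  "p_exp s lam = lam * exp (- lam * s)"

definition score_exp ::
  "nat \<Rightarrow> (nat \<Rightarrow> real) \<Rightarrow> (nat \<Rightarrow> nat) \<Rightarrow> real \<Rightarrow> real \<Rightarrow> real \<Rightarrow> real" where
  "score_exp n S L \<alpha> \<beta> \<gamma> =
     (\<Sum>i=1..n. - ln (p_exp (S i) (\<beta> * \<alpha> ^ L i)) + pen n \<gamma> (prev_level L i) (L i))"

definition exp_optimal ::
  "nat \<Rightarrow> (nat \<Rightarrow> real) \<Rightarrow> real \<Rightarrow> nat \<Rightarrow> (nat \<Rightarrow> nat) \<Rightarrow> real \<Rightarrow> real \<Rightarrow> bool" where
  "exp_optimal n S \<gamma> k L \<alpha> \<beta> \<longleftrightarrow>
     level_seq n k L \<and> \<alpha> > 1 \<and> \<beta> > 0 \<and>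
     (\<forall>L' \<alpha>' \<beta>'. level_seq n k L' \<and> \<alpha>' > 1 \<and> \<beta>' > 0 \<longrightarrow>
        score_exp n S L \<alpha> \<beta> \<gamma> \<le> score_exp n S L' \<alpha>' \<beta>' \<gamma>)"

definition mean_seq :: "nat \<Rightarrow> (nat \<Rightarrow> real) \<Rightarrow> real" where
  "mean_seq n S = (\<Sum>i=1..n. S i) / real n"

text \<open>The pairs (alpha, beta) on which ApproxExp(S,gamma,k,eps) runs Viterbi:
  alpha_j = (max S / min S) / c^j with c = (1+eps)^(1/(2k)), while alpha_j >= 1;
  for each such alpha, ExpAlpha(S,alpha,gamma,k,eps/2) tests
  beta_t = (1/mu) / (1+eps/2)^t while beta_t >= 1/(alpha^k mu).\<close>
definition approx_exp_tested ::
  "nat \<Rightarrow> (nat \<Rightarrow> real) \<Rightarrow> nat \<Rightarrow> real \<Rightarrow> (real \<times> real) set" where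
  "approx_exp_tested n S k \<epsilon> =
     (let A = Max (S ` {1..n}) / Min (S ` {1..n});
          c = (1 + \<epsilon>) powr (1 / (2 * real k));
          \<mu> = mean_seq n S
      in {(A / c ^ j, (1 / \<mu>) / (1 + \<epsilon> / 2) ^ t) | j t.
            A / c ^ j \<ge> 1 \<and>
            (1 / \<mu>) / (1 + \<epsilon> / 2) ^ t \<ge> 1 / ((A / c ^ j) ^ k * \<mu>)})"

text \<open>(L, alpha, beta) is an output of ApproxExp: (alpha, beta) is a tested pair, L is a
  Viterbi output for it (a score minimiser over level sequences), and its score is smallest
  among all observed triples.\<close>
definition approx_exp_output ::
  "nat \<Rightarrow> (nat \<Rightarrow> real) \<Rightarrow> real \<Rightarrow> nat \<Rightarrow> real \<Rightarrow> (nat \<Rightarrow> nat) \<Rightarrow> real \<Rightarrow> real \<Rightarrow> bool" where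
  "approx_exp_output n S \<gamma> k \<epsilon> L \<alpha> \<beta> \<longleftrightarrow>
     (\<alpha>, \<beta>) \<in> approx_exp_tested n S k \<epsilon> \<and> level_seq n k L \<and>
     (\<forall>(\<alpha>', \<beta>') \<in> approx_exp_tested n S k \<epsilon>. \<forall>L'. level_seq n k L' \<longrightarrow>
        score_exp n S L \<alpha> \<beta> \<gamma> \<le> score_exp n S L' \<alpha>' \<beta>' \<gamma>)"

end

theory Submission
  imports Defs
begin

text \<open>
  Write x_i = \<beta> \<alpha>^l_i s_i. Then the score minus \<psi> = \<Sum> ln s_i is \<Sum> (x_i - ln x_i) plus
  the penalty, and x - ln x \<ge> 1. At an optimum the score is stationary in ln \<alpha> and ln \<beta>,
  which gives \<Sum> x_i = n and \<Sum> l_i (x_i - 1) = 0. If a tested pair reproduces every rate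
  \<beta> \<alpha>^l_i up to a factor 1 + \<epsilon>/2, each term x - ln x grows by at most
  (\<epsilon>/2) x_i + \<epsilon>/2, in total by at most \<epsilon> n \<le> \<epsilon> \<Sum> (x_i - ln x_i).
  Such a pair exists: if \<alpha> is at most the spread max S / min S, the \<alpha>-grid (ratio c with
  c^k \<le> 1 + \<epsilon>/2) and the \<beta>-grid (ratio 1 + \<epsilon>/2) of ApproxExp contain one;
  otherwise a higher level always has a larger rate, so the two stationarity equations
  force the optimal levels to be constant and only \<beta> has to be matched.
\<close>

lemma neg_ln_p_exp:
  assumes "r > 0"
  shows "- ln (p_exp s r) = r * s - ln r"
  using assms unfolding p_exp_def by (simp add: ln_mult)

lemma score_exp_eq:
  assumes S: "\<forall>i\<in>{1..n}. S i > 0" and "a > 0" "b > 0"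
  shows "score_exp n S L a b \<gamma> =
      (\<Sum>i=1..n. b * a ^ L i * S i - ln (b * a ^ L i * S i)) + (\<Sum>i=1..n. ln (S i))
      + (\<Sum>i=1..n. pen n \<gamma> (prev_level L i) (L i))"
proof -
  have "- ln (p_exp (S i) (b * a ^ L i)) = (b * a ^ L i * S i - ln (b * a ^ L i * S i)) + ln (S i)"
    if "i \<in> {1..n}" for i
  proof -
    have "S i > 0" using that S by auto
    then show ?thesis using assms by (simp add: neg_ln_p_exp ln_mult)
  qed
  then show ?thesis
    unfolding score_exp_def by (simp add: sum.distrib)
qed

lemma score_exp_rescaled:
  assumes S: "\<forall>i\<in>{1..n}. S i > 0" and "a > 0" "b > 0"
  shows "score_exp n S L (a * exp u) (b * exp v) \<gamma> =
      (\<Sum>i=1..n. b * a ^ L i * S i * exp (v + real (L i) * u) - ln (b * a ^ L i * S i)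
                 - v - real (L i) * u)
      + (\<Sum>i=1..n. ln (S i)) + (\<Sum>i=1..n. pen n \<gamma> (prev_level L i) (L i))"
proof -
  have "b * exp v * (a * exp u) ^ L i * S i - ln (b * exp v * (a * exp u) ^ L i * S i)
      = b * a ^ L i * S i * exp (v + real (L i) * u) - ln (b * a ^ L i * S i)
        - v - real (L i) * u" if "i \<in> {1..n}" for i
  proof -
    have x: "b * a ^ L i * S i > 0" using that S assms by auto
    have eq: "b * exp v * (a * exp u) ^ L i * S i = b * a ^ L i * S i * exp (v + real (L i) * u)"
      by (simp add: power_mult_distrib exp_add exp_of_nat_mult[symmetric])
    show ?thesis
      unfolding eq ln_mult_pos[OF x exp_gt_zero] by simp
  qed
  then show ?thesis
    using score_exp_eq[of n S "a * exp u" "b * exp v" L \<gamma>] assms by simp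
qed

lemma score_exp_stationary:
  assumes S: "\<forall>i\<in>{1..n}. S i > 0" and a: "a > 1" and b: "b > 0"
    and min: "\<And>a' b'. a' > 1 \<Longrightarrow> b' > 0 \<Longrightarrow> score_exp n S L a b \<gamma> \<le> score_exp n S L a' b' \<gamma>"
  shows "(\<Sum>i=1..n. b * a ^ L i * S i) = real n"
    and "(\<Sum>i=1..n. real (L i) * (b * a ^ L i * S i - 1)) = 0"
proof -
  define x where "x i = b * a ^ L i * S i" for i
  define \<phi> where "\<phi> u v = (\<Sum>i=1..n. x i * exp (v + real (L i) * u) - ln (x i) - v - real (L i) * u)"
    for u v
  define C where "C = (\<Sum>i=1..n. ln (S i)) + (\<Sum>i=1..n. pen n \<gamma> (prev_level L i) (L i))"
  have score: "score_exp n S L (a * exp u) (b * exp v) \<gamma> = \<phi> u v + C" for u v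
    using score_exp_rescaled[OF S, of a b L u v \<gamma>] a b unfolding \<phi>_def x_def C_def by simp
  have min_\<phi>: "\<phi> 0 0 \<le> \<phi> u v" if "a * exp u > 1" for u v
    using min[OF that, of "b * exp v"] score[of 0 0] score[of u v] b by simp
  have "DERIV (\<lambda>v. \<phi> 0 v) 0 :> (\<Sum>i=1..n. x i - 1)"
    unfolding \<phi>_def by (auto intro!: derivative_eq_intros)
  then have "(\<Sum>i=1..n. x i - 1) = 0"
    by (rule DERIV_local_min[of _ _ _ 1]) (use min_\<phi> a in auto)
  then show "(\<Sum>i=1..n. b * a ^ L i * S i) = real n"
    unfolding x_def by (simp add: sum_subtractf)
  have "DERIV (\<lambda>u. \<phi> u 0) 0 :> (\<Sum>i=1..n. real (L i) * x i - real (L i))"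
    unfolding \<phi>_def by (auto intro!: derivative_eq_intros)
  moreover have "a * exp u > 1" if "\<bar>0 - u\<bar> < ln a" for u
  proof -
    have "exp (- ln a) < exp u" using that by simp
    then show ?thesis using a by (simp add: exp_minus field_simps)
  qed
  ultimately have "(\<Sum>i=1..n. real (L i) * x i - real (L i)) = 0"
    by (intro DERIV_local_min[of _ _ _ "ln a"]) (use min_\<phi> a in auto)
  then show "(\<Sum>i=1..n. real (L i) * (b * a ^ L i * S i - 1)) = 0"
    unfolding x_def by (simp add: algebra_simps)
qed

lemma exp_optimal_stationary:
  assumes "\<forall>i\<in>{1..n}. S i > 0" and "exp_optimal n S \<gamma> k L a b"
  shows "(\<Sum>i=1..n. b * a ^ L i * S i) = real n"
    and "(\<Sum>i=1..n. real (L i) * (b * a ^ L i * S i - 1)) = 0"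
proof -
  have "a > 1" "b > 0"
    and min: "\<And>a' b'. a' > 1 \<Longrightarrow> b' > 0 \<Longrightarrow> score_exp n S L a b \<gamma> \<le> score_exp n S L a' b' \<gamma>"
    using assms(2) unfolding exp_optimal_def by auto
  show "(\<Sum>i=1..n. b * a ^ L i * S i) = real n"
    by (rule score_exp_stationary(1)[OF assms(1) \<open>a > 1\<close> \<open>b > 0\<close>]) (rule min)
  show "(\<Sum>i=1..n. real (L i) * (b * a ^ L i * S i - 1)) = 0"
    by (rule score_exp_stationary(2)[OF assms(1) \<open>a > 1\<close> \<open>b > 0\<close>]) (rule min)
qed

lemma pen_nonneg:
  assumes "\<gamma> \<ge> 0"
  shows "pen n \<gamma> x y \<ge> 0"
  using assms unfolding pen_def by (cases n) auto

lemma sum_minus_ln_perturb: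
  fixes x y :: "'a \<Rightarrow> real"
  assumes "finite I" and x_pos: "\<forall>i\<in>I. x i > 0" and "\<delta> \<ge> 0"
    and close: "\<forall>i\<in>I. x i \<le> (1 + \<delta>) * y i \<and> y i \<le> (1 + \<delta>) * x i"
    and sum_x: "(\<Sum>i\<in>I. x i) = real (card I)"
  shows "(\<Sum>i\<in>I. y i - ln (y i)) \<le> (1 + 2 * \<delta>) * (\<Sum>i\<in>I. x i - ln (x i))"
proof -
  have term_le: "y i - ln (y i) \<le> (x i - ln (x i)) + \<delta> * x i + \<delta>" if "i \<in> I" for i
  proof -
    have xi: "x i > 0" and lo: "x i \<le> (1 + \<delta>) * y i" and hi: "y i \<le> (1 + \<delta>) * x i"
      using that x_pos close by auto
    then have yi: "y i > 0"
      using \<open>\<delta> \<ge> 0\<close> by (smt (verit) mult_nonneg_nonpos)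
    have "ln (x i) \<le> ln ((1 + \<delta>) * y i)"
      using lo xi by simp
    also have "\<dots> = ln (1 + \<delta>) + ln (y i)"
      using yi \<open>\<delta> \<ge> 0\<close> by (simp add: ln_mult_pos)
    also have "\<dots> \<le> \<delta> + ln (y i)"
      using ln_add_one_self_le_self[OF \<open>\<delta> \<ge> 0\<close>] by simp
    finally show ?thesis
      using hi by (simp add: algebra_simps)
  qed
  have card_le: "real (card I) \<le> (\<Sum>i\<in>I. x i - ln (x i))"
    using sum_mono[of I "\<lambda>_. 1::real" "\<lambda>i. x i - ln (x i)"] x_pos ln_le_minus_one by force
  have "(\<Sum>i\<in>I. y i - ln (y i)) \<le> (\<Sum>i\<in>I. (x i - ln (x i)) + \<delta> * x i + \<delta>)"
    by (rule sum_mono) (rule term_le)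
  also have "\<dots> = (\<Sum>i\<in>I. x i - ln (x i)) + 2 * \<delta> * real (card I)"
    using sum_x by (simp add: sum.distrib sum_distrib_left[symmetric])
  also have "\<dots> \<le> (1 + 2 * \<delta>) * (\<Sum>i\<in>I. x i - ln (x i))"
    using mult_left_mono[OF card_le, of "2 * \<delta>"] \<open>\<delta> \<ge> 0\<close> by (simp add: algebra_simps)
  finally show ?thesis .
qed

definition rates_within ::
  "real \<Rightarrow> nat \<Rightarrow> (nat \<Rightarrow> nat) \<Rightarrow> real \<Rightarrow> real \<Rightarrow> real \<Rightarrow> real \<Rightarrow> bool" where
  "rates_within d n L a b a' b' \<longleftrightarrow>
     (\<forall>i\<in>{1..n}. b * a ^ L i \<le> d * (b' * a' ^ L i) \<and> b' * a' ^ L i \<le> d * (b * a ^ L i))"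

lemma score_exp_rates_within:
  assumes S: "\<forall>i\<in>{1..n}. S i > 0" and "\<gamma> \<ge> 0" "\<delta> \<ge> 0"
    and "a > 0" "b > 0" "a' > 0" "b' > 0"
    and sum_rates: "(\<Sum>i=1..n. b * a ^ L i * S i) = real n"
    and within: "rates_within (1 + \<delta>) n L a b a' b'"
  shows "score_exp n S L a' b' \<gamma> - (\<Sum>i=1..n. ln (S i))
           \<le> (1 + 2 * \<delta>) * (score_exp n S L a b \<gamma> - (\<Sum>i=1..n. ln (S i)))"
proof -
  define x where "x i = b * a ^ L i * S i" for i
  define y where "y i = b' * a' ^ L i * S i" for i
  define P where "P = (\<Sum>i=1..n. pen n \<gamma> (prev_level L i) (L i))"
  have "P \<ge> 0"
    unfolding P_def using \<open>\<gamma> \<ge> 0\<close> by (intro sum_nonneg pen_nonneg)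
  have "x i \<le> (1 + \<delta>) * y i \<and> y i \<le> (1 + \<delta>) * x i" if "i \<in> {1..n}" for i
  proof -
    have "S i > 0" using that S by auto
    then show ?thesis
      using within that unfolding rates_within_def x_def y_def
      by (auto simp: mult.assoc[symmetric] intro: mult_right_mono)
  qed
  moreover have "\<forall>i\<in>{1..n}. x i > 0"
    using S \<open>a > 0\<close> \<open>b > 0\<close> unfolding x_def by auto
  ultimately have "(\<Sum>i=1..n. y i - ln (y i)) \<le> (1 + 2 * \<delta>) * (\<Sum>i=1..n. x i - ln (x i))"
    using sum_rates \<open>\<delta> \<ge> 0\<close> by (intro sum_minus_ln_perturb) (auto simp: x_def)
  moreover have "P \<le> (1 + 2 * \<delta>) * P"
    using \<open>P \<ge> 0\<close> \<open>\<delta> \<ge> 0\<close> by (simp add: algebra_simps)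
  ultimately show ?thesis
    using score_exp_eq[OF S, of a b L \<gamma>] score_exp_eq[OF S, of a' b' L \<gamma>] assms(4-7)
    unfolding x_def y_def P_def by (simp add: distrib_left)
qed

lemma geometric_grid_point:
  fixes c lo hi :: real
  assumes "c > 1" "0 < lo" "lo \<le> hi"
  shows "\<exists>j. lo \<le> hi / c ^ j \<and> hi / c ^ j < c * lo"
proof (cases "hi < c * lo")
  case True
  then show ?thesis
    using assms by (intro exI[of _ 0]) simp
next
  case False
  obtain m where "hi / (c * lo) < c ^ m"
    using real_arch_pow[OF \<open>c > 1\<close>] by blast
  then have "hi / c ^ m < c * lo"
    using assms by (simp add: field_simps)
  then obtain j where "\<not> hi / c ^ j < c * lo" "hi / c ^ Suc j < c * lo"
    using ex_least_nat_less[of "\<lambda>j. hi / c ^ j < c * lo"] False by auto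
  then show ?thesis
    using assms by (intro exI[of _ "Suc j"]) (simp add: field_simps)
qed

lemma approx_exp_alpha_ratio:
  assumes "k \<ge> 1" "e > 0"
  shows "(1 + e) powr (1 / (2 * real k)) > 1"
    and "((1 + e) powr (1 / (2 * real k))) ^ k \<le> 1 + e / 2"
proof -
  show "(1 + e) powr (1 / (2 * real k)) > 1"
    using assms by simp
  have "((1 + e) powr (1 / (2 * real k))) ^ k = (1 + e) powr (1 / 2)"
    using assms by (simp add: powr_realpow[symmetric] powr_powr)
  also have "\<dots> = sqrt (1 + e)"
    using assms by (simp add: powr_half_sqrt)
  also have "\<dots> \<le> 1 + e / 2"
    using assms by (intro real_le_lsqrt) (auto simp: power2_eq_square algebra_simps)
  finally show "((1 + e) powr (1 / (2 * real k))) ^ k \<le> 1 + e / 2" .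
qed

lemma le_spread_mult:
  fixes S :: "'a \<Rightarrow> real"
  assumes "finite I" "\<forall>i\<in>I. S i > 0" "i \<in> I" "j \<in> I"
  shows "S j \<le> Max (S ` I) / Min (S ` I) * S i"
proof -
  have "Min (S ` I) \<in> S ` I"
    using assms by (intro Min_in) auto
  then have Min: "Min (S ` I) > 0" "Min (S ` I) \<le> S i" and Max: "S j \<le> Max (S ` I)"
    using assms by auto
  then have "Max (S ` I) / Min (S ` I) \<ge> 0"
    using assms by (smt (verit) divide_nonneg_pos)
  then have "Max (S ` I) / Min (S ` I) * Min (S ` I) \<le> Max (S ` I) / Min (S ` I) * S i"
    using Min by (intro mult_left_mono)
  then show ?thesis
    using Min Max by simp
qed

lemma one_le_spread:
  fixes S :: "'a \<Rightarrow> real"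
  assumes "finite I" "\<forall>i\<in>I. S i > 0" "i \<in> I"
  shows "1 \<le> Max (S ` I) / Min (S ` I)"
proof -
  have "S i * 1 \<le> S i * (Max (S ` I) / Min (S ` I))"
    using le_spread_mult[OF assms assms(3)] by (simp add: mult.commute)
  then show ?thesis
    using assms(2,3) by (simp only: mult_le_cancel_left_pos)
qed

lemma mean_seq_pos:
  assumes "\<forall>i\<in>{1..n}. S i > 0" "n \<ge> 1"
  shows "mean_seq n S > 0"
  unfolding mean_seq_def using assms by (intro divide_pos_pos sum_pos) auto

lemma mean_seq_rate_bounds:
  assumes S: "\<forall>i\<in>{1..n}. S i > 0" and "n \<ge> 1" "a \<ge> 1" "b > 0" and L: "level_seq n k L"
    and sum_rates: "(\<Sum>i=1..n. b * a ^ L i * S i) = real n"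
  shows "b * mean_seq n S \<le> 1" and "1 \<le> b * a ^ k * mean_seq n S"
proof -
  have sum_S: "(\<Sum>i=1..n. S i) = real n * mean_seq n S"
    unfolding mean_seq_def using \<open>n \<ge> 1\<close> by simp
  have "(\<Sum>i=1..n. b * S i) \<le> (\<Sum>i=1..n. b * a ^ L i * S i)"
    using S \<open>a \<ge> 1\<close> \<open>b > 0\<close> by (intro sum_mono) (simp add: mult_le_cancel_left1)
  then show "b * mean_seq n S \<le> 1"
    using sum_rates sum_S \<open>n \<ge> 1\<close> by (simp add: sum_distrib_left[symmetric])
  have "(\<Sum>i=1..n. b * a ^ L i * S i) \<le> (\<Sum>i=1..n. b * a ^ k * S i)"
    using S L \<open>a \<ge> 1\<close> \<open>b > 0\<close> unfolding level_seq_def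
    by (intro sum_mono mult_right_mono mult_left_mono power_increasing) (auto simp: less_imp_le)
  then show "1 \<le> b * a ^ k * mean_seq n S"
    using sum_rates sum_S \<open>n \<ge> 1\<close> by (simp add: sum_distrib_left[symmetric])
qed

lemma stationary_levels_const:
  fixes x l :: "'a \<Rightarrow> real"
  assumes "finite I" "I \<noteq> {}"
    and sum_x: "(\<Sum>i\<in>I. x i - 1) = 0" and sum_lx: "(\<Sum>i\<in>I. l i * (x i - 1)) = 0"
    and mono: "\<And>i j. i \<in> I \<Longrightarrow> j \<in> I \<Longrightarrow> l j < l i \<Longrightarrow> x j < x i"
  shows "\<exists>c. \<forall>i\<in>I. l i = c"
proof -
  define J where "J = {i\<in>I. x i \<ge> 1}"
  have "J \<noteq> {}"
  proof
    assume "J = {}"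
    then have "(\<Sum>i\<in>I. x i - 1) < (\<Sum>i\<in>I. 0)"
      using assms(1,2) unfolding J_def by (intro sum_strict_mono) auto
    then show False
      using sum_x by simp
  qed
  moreover have "finite J"
    using assms(1) unfolding J_def by simp
  ultimately have "Min (l ` J) \<in> l ` J"
    by (intro Min_in) auto
  then obtain i0 where i0: "i0 \<in> J" and "l i0 = Min (l ` J)"
    by (metis imageE)
  then have i0_min: "l i0 \<le> l i" if "i \<in> J" for i
    using that \<open>finite J\<close> by simp
  define c where "c = l i0"
  \<comment> \<open>c is the least level with a rate \<ge> 1; by monotonicity rates are < 1 below c, > 1 above.\<close>
  have pos: "(l i - c) * (x i - 1) > 0" if "i \<in> I" "l i \<noteq> c" for i
  proof (cases "l i < c")
    case True
    then have "x i < 1"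
      using i0_min[of i] that unfolding J_def c_def by force
    then show ?thesis
      using True by (simp add: mult_neg_neg)
  next
    case False
    then have "x i0 < x i"
      using mono[of i i0] that i0 unfolding J_def c_def by auto
    then show ?thesis
      using False that i0 unfolding J_def by auto
  qed
  have "(\<Sum>i\<in>I. (l i - c) * (x i - 1)) = (\<Sum>i\<in>I. l i * (x i - 1) - c * (x i - 1))"
    by (simp only: left_diff_distrib)
  also have "\<dots> = (\<Sum>i\<in>I. l i * (x i - 1)) - (\<Sum>i\<in>I. c * (x i - 1))"
    by (rule sum_subtractf)
  also have "(\<Sum>i\<in>I. c * (x i - 1)) = c * (\<Sum>i\<in>I. x i - 1)"
    by (rule sum_distrib_left[symmetric])
  finally have "(\<Sum>i\<in>I. (l i - c) * (x i - 1)) = 0"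
    using sum_x sum_lx by simp
  moreover have "(l i - c) * (x i - 1) \<ge> 0" if "i \<in> I" for i
    using pos[OF that] by (cases "l i = c") auto
  ultimately have "(l i - c) * (x i - 1) = 0" if "i \<in> I" for i
    using sum_nonneg_eq_0_iff[OF assms(1), of "\<lambda>i. (l i - c) * (x i - 1)"] that by simp
  then show ?thesis
    by (metis pos less_irrefl)
qed

lemma stationary_levels_const_above_spread:
  assumes S: "\<forall>i\<in>{1..n}. S i > 0" and "n \<ge> 1"
    and spread_a: "Max (S ` {1..n}) / Min (S ` {1..n}) < a" and "b > 0"
    and sum_rates: "(\<Sum>i=1..n. b * a ^ L i * S i) = real n"
    and sum_levels: "(\<Sum>i=1..n. real (L i) * (b * a ^ L i * S i - 1)) = 0"
  shows "\<forall>i\<in>{1..n}. L i = L 1"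
proof -
  define A where "A = Max (S ` {1..n}) / Min (S ` {1..n})"
  define x where "x i = b * a ^ L i * S i" for i
  have "1 \<in> {1..n}"
    using \<open>n \<ge> 1\<close> by simp
  have spread: "S j \<le> A * S i" if "i \<in> {1..n}" "j \<in> {1..n}" for i j
    unfolding A_def using S that by (intro le_spread_mult) auto
  have "A \<ge> 1"
    unfolding A_def using S \<open>1 \<in> {1..n}\<close> by (intro one_le_spread) auto
  moreover have "A < a"
    using spread_a unfolding A_def .
  ultimately have "a > 1"
    by simp
  have mono: "x j < x i" if "i \<in> {1..n}" "j \<in> {1..n}" "real (L j) < real (L i)" for i j
  proof -
    have "A * a ^ L j < a * a ^ L j"
      using \<open>A < a\<close> \<open>a > 1\<close> by simp
    also have "\<dots> \<le> a ^ L i"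
      using that(3) \<open>a > 1\<close> by (metis Suc_leI of_nat_less_iff power_Suc power_increasing less_imp_le)
    finally have "A * a ^ L j * S i < a ^ L i * S i"
      using S that(1) by simp
    moreover have "a ^ L j * S j \<le> A * a ^ L j * S i"
      using spread[OF that(1,2)] \<open>a > 1\<close> by (simp add: mult.left_commute mult_left_mono)
    ultimately show ?thesis
      unfolding x_def using \<open>b > 0\<close> by (simp add: mult.assoc)
  qed
  have "(\<Sum>i=1..n. x i - 1) = 0"
    using sum_rates unfolding x_def by (simp add: sum_subtractf)
  then obtain l where "\<forall>i\<in>{1..n}. real (L i) = l"
    using stationary_levels_const[of "{1..n}" x "\<lambda>i. real (L i)"] sum_levels mono \<open>n \<ge> 1\<close>
    unfolding x_def by auto
  then show ?thesis
    using \<open>1 \<in> {1..n}\<close> by (metis of_nat_eq_iff)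
qed

lemma approx_exp_tested_beta:
  fixes n k :: nat and S :: "nat \<Rightarrow> real" and e :: real
  defines "A \<equiv> Max (S ` {1..n}) / Min (S ` {1..n})"
    and "c \<equiv> (1 + e) powr (1 / (2 * real k))"
    and "\<mu> \<equiv> mean_seq n S"
  assumes "e > 0" "\<mu> > 0" and alpha: "A / c ^ j \<ge> 1" and lo: "0 < lo" "lo \<le> 1 / \<mu>"
  shows "\<exists>b'. (A / c ^ j, b') \<in> approx_exp_tested n S k e \<and> lo \<le> b'
            \<and> b' < (1 + e / 2) * max lo (1 / ((A / c ^ j) ^ k * \<mu>))"
proof -
  define lo' where "lo' = max lo (1 / ((A / c ^ j) ^ k * \<mu>))"
  have "1 \<le> (A / c ^ j) ^ k"
    using alpha by simp
  then have "1 / ((A / c ^ j) ^ k * \<mu>) \<le> 1 / \<mu>"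
    using \<open>\<mu> > 0\<close> by (intro divide_left_mono) (auto intro: mult_pos_pos)
  then have "0 < lo'" "lo' \<le> 1 / \<mu>"
    using lo unfolding lo'_def by auto
  then obtain t where t: "lo' \<le> (1 / \<mu>) / (1 + e / 2) ^ t" "(1 / \<mu>) / (1 + e / 2) ^ t < (1 + e / 2) * lo'"
    using geometric_grid_point[of "1 + e / 2" lo' "1 / \<mu>"] \<open>e > 0\<close> by auto
  have "(A / c ^ j, (1 / \<mu>) / (1 + e / 2) ^ t) \<in> approx_exp_tested n S k e"
    unfolding approx_exp_tested_def Let_def A_def[symmetric] c_def[symmetric] \<mu>_def[symmetric]
    using alpha t(1) unfolding lo'_def by fastforce
  then show ?thesis
    using t unfolding lo'_def by auto
qed

lemma rate_of_beta_lower_bounds_le: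
  fixes a a' b c d \<mu> :: real
  assumes a: "1 < a" "a \<le> a'" "a' \<le> c * a" and c: "1 \<le> c" "c ^ k \<le> d"
    and "d > 0" "b > 0" "\<mu> > 0" and b_ak_mu: "1 \<le> b * a ^ k * \<mu>" and "l \<le> k"
  shows "max (b / d) (1 / (a' ^ k * \<mu>)) * a' ^ l \<le> b * a ^ l"
proof -
  have "a' ^ l \<le> (c * a) ^ l"
    using a by (intro power_mono) auto
  also have "\<dots> \<le> c ^ k * a ^ l"
    using c a \<open>l \<le> k\<close> by (simp add: power_mult_distrib power_increasing)
  also have "\<dots> \<le> d * a ^ l"
    using c a by simp
  finally have "b / d * a' ^ l \<le> b * a ^ l"
    using \<open>b > 0\<close> \<open>d > 0\<close> by (simp add: field_simps)
  moreover have "1 / (a' ^ k * \<mu>) * a' ^ l \<le> b * a ^ l"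
  proof -
    have split_k: "x ^ k = x ^ l * x ^ (k - l)" for x :: real
      using \<open>l \<le> k\<close> by (simp add: power_add[symmetric])
    have "1 / (a' ^ k * \<mu>) * a' ^ l = 1 / (a' ^ (k - l) * \<mu>)"
      using a unfolding split_k by simp
    also have "\<dots> \<le> 1 / (a ^ (k - l) * \<mu>)"
      using a \<open>\<mu> > 0\<close> by (intro divide_left_mono mult_right_mono power_mono mult_pos_pos) auto
    also have "\<dots> = a ^ l / (a ^ k * \<mu>)"
      using a unfolding split_k by simp
    also have "\<dots> \<le> b * a ^ l"
      using b_ak_mu a \<open>\<mu> > 0\<close> by (simp add: field_simps)
    finally show ?thesis .
  qed
  ultimately show ?thesis
    by (simp add: max_def)
qed

lemma approx_exp_tested_within_low_alpha:
  fixes n k :: nat and S :: "nat \<Rightarrow> real" and e :: real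
  defines "A \<equiv> Max (S ` {1..n}) / Min (S ` {1..n})"
  assumes S: "\<forall>i\<in>{1..n}. S i > 0" and "n \<ge> 1" "k \<ge> 1" "e > 0"
    and a: "1 < a" "a \<le> A" and "b > 0" and L: "level_seq n k L"
    and sum_rates: "(\<Sum>i=1..n. b * a ^ L i * S i) = real n"
  shows "\<exists>a' b'. (a', b') \<in> approx_exp_tested n S k e \<and> a' > 0 \<and> b' > 0
           \<and> rates_within (1 + e / 2) n L a b a' b'"
proof -
  define c where "c = (1 + e) powr (1 / (2 * real k))"
  define \<mu> where "\<mu> = mean_seq n S"
  define d where "d = 1 + e / 2"
  have "d > 1"
    using \<open>e > 0\<close> unfolding d_def by simp
  have c: "c > 1" "c ^ k \<le> d"
    using approx_exp_alpha_ratio[OF \<open>k \<ge> 1\<close> \<open>e > 0\<close>] unfolding c_def d_def by auto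
  have "\<mu> > 0"
    unfolding \<mu>_def using S \<open>n \<ge> 1\<close> by (rule mean_seq_pos)
  have b_mu: "b * \<mu> \<le> 1" and b_ak_mu: "1 \<le> b * a ^ k * \<mu>"
    unfolding \<mu>_def using mean_seq_rate_bounds[OF S \<open>n \<ge> 1\<close> _ \<open>b > 0\<close> L sum_rates] a by auto
  obtain j where j: "a \<le> A / c ^ j" "A / c ^ j < c * a"
    using geometric_grid_point[OF \<open>c > 1\<close>, of a A] a by auto
  define a' where "a' = A / c ^ j"
  have "a' > 1"
    using j a unfolding a'_def by simp
  have "b / d \<le> 1 / \<mu>"
    using b_mu \<open>d > 1\<close> \<open>b > 0\<close> \<open>\<mu> > 0\<close> by (simp add: field_simps)
  then obtain b' where tested: "(a', b') \<in> approx_exp_tested n S k e" and "b / d \<le> b'"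
    and b'_hi: "b' < d * max (b / d) (1 / (a' ^ k * \<mu>))"
    using approx_exp_tested_beta[of e n S k j "b / d"] \<open>e > 0\<close> \<open>\<mu> > 0\<close> \<open>a' > 1\<close> \<open>b > 0\<close> \<open>d > 1\<close>
    unfolding A_def c_def \<mu>_def d_def a'_def by auto
  have "b' > 0"
    using \<open>b / d \<le> b'\<close> \<open>b > 0\<close> \<open>d > 1\<close> by (smt (verit) divide_pos_pos)
  have "rates_within d n L a b a' b'"
    unfolding rates_within_def
  proof
    fix i assume "i \<in> {1..n}"
    then have "L i \<le> k"
      using L unfolding level_seq_def by auto
    have "b * a ^ L i = d * (b / d * a ^ L i)"
      using \<open>d > 1\<close> by simp
    also have "\<dots> \<le> d * (b' * a' ^ L i)"
      using \<open>b / d \<le> b'\<close> \<open>b' > 0\<close> j a \<open>b > 0\<close> \<open>d > 1\<close> unfolding a'_def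
      by (intro mult_left_mono mult_mono power_mono) auto
    finally have lower: "b * a ^ L i \<le> d * (b' * a' ^ L i)" .
    have "b' * a' ^ L i \<le> d * max (b / d) (1 / (a' ^ k * \<mu>)) * a' ^ L i"
      using b'_hi \<open>a' > 1\<close> by (intro mult_right_mono) auto
    also have "\<dots> \<le> d * (b * a ^ L i)"
      using rate_of_beta_lower_bounds_le[OF a(1) j(1) less_imp_le[OF j(2)] _ c(2) _ \<open>b > 0\<close> \<open>\<mu> > 0\<close> b_ak_mu \<open>L i \<le> k\<close>]
        c(1) \<open>d > 1\<close> unfolding a'_def by (simp add: mult.assoc)
    finally show "b * a ^ L i \<le> d * (b' * a' ^ L i) \<and> b' * a' ^ L i \<le> d * (b * a ^ L i)"
      using lower by simp
  qed
  then show ?thesis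
    using tested \<open>a' > 1\<close> \<open>b' > 0\<close> unfolding d_def by (intro exI[of _ a'] exI[of _ b']) auto
qed

lemma approx_exp_tested_within_high_alpha:
  fixes n k :: nat and S :: "nat \<Rightarrow> real" and e :: real
  defines "A \<equiv> Max (S ` {1..n}) / Min (S ` {1..n})"
  assumes S: "\<forall>i\<in>{1..n}. S i > 0" and "n \<ge> 1" "e > 0"
    and "A < a" "b > 0" and L: "level_seq n k L"
    and sum_rates: "(\<Sum>i=1..n. b * a ^ L i * S i) = real n"
    and sum_levels: "(\<Sum>i=1..n. real (L i) * (b * a ^ L i * S i - 1)) = 0"
  shows "\<exists>a' b'. (a', b') \<in> approx_exp_tested n S k e \<and> a' > 0 \<and> b' > 0
           \<and> rates_within (1 + e / 2) n L a b a' b'"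
proof -
  define \<mu> where "\<mu> = mean_seq n S"
  define d where "d = 1 + e / 2"
  have "1 \<in> {1..n}"
    using \<open>n \<ge> 1\<close> by simp
  have "A \<ge> 1"
    unfolding A_def using S \<open>1 \<in> {1..n}\<close> by (intro one_le_spread) auto
  define l where "l = L 1"
  have L_const: "L i = l" if "i \<in> {1..n}" for i
    using stationary_levels_const_above_spread[OF S \<open>n \<ge> 1\<close> _ \<open>b > 0\<close> sum_rates sum_levels]
      \<open>A < a\<close> that unfolding A_def l_def by blast
  have "l \<le> k"
    using L \<open>1 \<in> {1..n}\<close> unfolding level_seq_def l_def by auto
  have "\<mu> > 0"
    unfolding \<mu>_def using S \<open>n \<ge> 1\<close> by (rule mean_seq_pos)
  have "real n = (\<Sum>i=1..n. b * a ^ l * S i)"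
    using sum_rates L_const by simp
  also have "\<dots> = b * a ^ l * (\<Sum>i=1..n. S i)"
    by (simp only: sum_distrib_left)
  also have "(\<Sum>i=1..n. S i) = real n * \<mu>"
    unfolding \<mu>_def mean_seq_def using \<open>n \<ge> 1\<close> by simp
  finally have rate: "b * a ^ l = 1 / \<mu>"
    using \<open>n \<ge> 1\<close> \<open>\<mu> > 0\<close> by (simp add: field_simps)
  have "1 \<le> A ^ l" "A ^ l \<le> A ^ k"
    using \<open>A \<ge> 1\<close> \<open>l \<le> k\<close> by (auto intro: power_increasing)
  then have "1 / (A ^ k * \<mu>) \<le> 1 / (A ^ l * \<mu>)"
    using \<open>\<mu> > 0\<close> by (intro divide_left_mono mult_right_mono mult_pos_pos) auto
  then have max_eq: "max (1 / (A ^ l * \<mu>)) (1 / (A ^ k * \<mu>)) = 1 / (A ^ l * \<mu>)"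
    by (rule max_absorb1)
  have "1 / (A ^ l * \<mu>) \<le> 1 / \<mu>"
    using \<open>1 \<le> A ^ l\<close> \<open>\<mu> > 0\<close> by (simp add: field_simps)
  then obtain b' where tested: "(A, b') \<in> approx_exp_tested n S k e"
    and lo: "1 / (A ^ l * \<mu>) \<le> b'" and hi: "b' < d * (1 / (A ^ l * \<mu>))"
    using approx_exp_tested_beta[of e n S k 0 "1 / (A ^ l * \<mu>)"] \<open>e > 0\<close> \<open>\<mu> > 0\<close> \<open>A \<ge> 1\<close>
      \<open>1 \<le> A ^ l\<close> max_eq unfolding A_def \<mu>_def d_def by auto
  have "b' > 0"
    using lo \<open>\<mu> > 0\<close> \<open>1 \<le> A ^ l\<close> by (smt (verit) divide_pos_pos mult_pos_pos)
  have "1 / \<mu> \<le> b' * A ^ l" "b' * A ^ l < d / \<mu>"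
    using lo hi \<open>\<mu> > 0\<close> \<open>1 \<le> A ^ l\<close> by (simp_all add: field_simps)
  moreover have "b' * A ^ l \<le> d * (b' * A ^ l)"
    using mult_right_mono[of 1 d "b' * A ^ l"] \<open>e > 0\<close> \<open>b' > 0\<close> \<open>1 \<le> A ^ l\<close>
    unfolding d_def by simp
  ultimately have "b * a ^ l \<le> d * (b' * A ^ l)" "b' * A ^ l \<le> d * (b * a ^ l)"
    unfolding rate by simp_all
  then have "rates_within d n L a b A b'"
    unfolding rates_within_def using L_const by auto
  then show ?thesis
    using tested \<open>A \<ge> 1\<close> \<open>b' > 0\<close> unfolding d_def by (intro exI[of _ A] exI[of _ b']) auto
qed

lemma approx_exp_tested_within_optimum:
  assumes S: "\<forall>i\<in>{1..n}. S i > 0" and "n \<ge> 1" "k \<ge> 1" "e > 0"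
    and opt: "exp_optimal n S \<gamma> k L a b"
  shows "\<exists>a' b'. (a', b') \<in> approx_exp_tested n S k e \<and> a' > 0 \<and> b' > 0
           \<and> rates_within (1 + e / 2) n L a b a' b'"
proof -
  have "a > 1" "b > 0" and L: "level_seq n k L"
    using opt unfolding exp_optimal_def by auto
  note stationary = exp_optimal_stationary[OF S opt]
  show ?thesis
  proof (cases "a \<le> Max (S ` {1..n}) / Min (S ` {1..n})")
    case True
    show ?thesis
      by (rule approx_exp_tested_within_low_alpha[OF S \<open>n \<ge> 1\<close> \<open>k \<ge> 1\<close> \<open>e > 0\<close> \<open>a > 1\<close> True
          \<open>b > 0\<close> L stationary(1)])
  next
    case False
    then show ?thesis
      using approx_exp_tested_within_high_alpha[OF S \<open>n \<ge> 1\<close> \<open>e > 0\<close> _ \<open>b > 0\<close> L stationary]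
      by (meson not_le)
  qed
qed

lemma n_ln_geometric_mean:
  assumes "\<forall>i\<in>{1..n}. S i > 0" and "n \<ge> 1"
  shows "real n * ln ((\<Prod>i=1..n. S i) powr (1 / real n)) = (\<Sum>i=1..n. ln (S i))"
proof -
  have "ln (\<Prod>i=1..n. S i) = (\<Sum>i=1..n. ln (S i))"
    by (rule ln_prod) (use assms in force)+
  moreover have "(\<Prod>i=1..n. S i) > 0"
    using assms(1) by (intro prod_pos) auto
  ultimately show ?thesis
    using assms(2) by (simp add: ln_powr)
qed

theorem proposition8:
  fixes n k :: nat and S :: "nat \<Rightarrow> real" and \<gamma> \<epsilon> :: real
    and Lopt L :: "nat \<Rightarrow> nat" and \<alpha>opt \<beta>opt \<alpha> \<beta> :: real
  assumes "n \<ge> 1"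
    and "\<forall>i\<in>{1..n}. S i > 0"
    and "\<gamma> > 0" and "k \<ge> 1" and "\<epsilon> > 0"
    and "exp_optimal n S \<gamma> k Lopt \<alpha>opt \<beta>opt"
    and "approx_exp_output n S \<gamma> k \<epsilon> L \<alpha> \<beta>"
  shows "score_exp n S L \<alpha> \<beta> \<gamma> - real n * ln ((\<Prod>i=1..n. S i) powr (1 / real n))
           \<le> (1 + \<epsilon>) * (score_exp n S Lopt \<alpha>opt \<beta>opt \<gamma>
                           - real n * ln ((\<Prod>i=1..n. S i) powr (1 / real n)))
         \<and> ((\<Prod>i=1..n. S i) powr (1 / real n) \<ge> 1 \<longrightarrow>
           score_exp n S L \<alpha> \<beta> \<gamma> \<le> (1 + \<epsilon>) * score_exp n S Lopt \<alpha>opt \<beta>opt \<gamma>)"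
proof -
  note n = assms(1) and S = assms(2) and opt = assms(6)
  define \<psi> where "\<psi> = real n * ln ((\<Prod>i=1..n. S i) powr (1 / real n))"
  have "\<alpha>opt > 1" "\<beta>opt > 0" "level_seq n k Lopt"
    using opt unfolding exp_optimal_def by auto
  obtain a' b' where "(a', b') \<in> approx_exp_tested n S k \<epsilon>" "a' > 0" "b' > 0"
    and within: "rates_within (1 + \<epsilon> / 2) n Lopt \<alpha>opt \<beta>opt a' b'"
    using approx_exp_tested_within_optimum[OF S n assms(4,5) opt] by blast
  then have "score_exp n S L \<alpha> \<beta> \<gamma> \<le> score_exp n S Lopt a' b' \<gamma>"
    using assms(7) \<open>level_seq n k Lopt\<close> unfolding approx_exp_output_def by blast
  moreover have "score_exp n S Lopt a' b' \<gamma> - \<psi> \<le> (1 + \<epsilon>) * (score_exp n S Lopt \<alpha>opt \<beta>opt \<gamma> - \<psi>)"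
    using score_exp_rates_within[OF S _ _ _ \<open>\<beta>opt > 0\<close> \<open>a' > 0\<close> \<open>b' > 0\<close>
        exp_optimal_stationary(1)[OF S opt] within]
      \<open>\<alpha>opt > 1\<close> assms(3,5) n_ln_geometric_mean[OF S n]
    unfolding \<psi>_def by simp
  ultimately have approx: "score_exp n S L \<alpha> \<beta> \<gamma> - \<psi> \<le> (1 + \<epsilon>) * (score_exp n S Lopt \<alpha>opt \<beta>opt \<gamma> - \<psi>)"
    by linarith
  moreover have "score_exp n S L \<alpha> \<beta> \<gamma> \<le> (1 + \<epsilon>) * score_exp n S Lopt \<alpha>opt \<beta>opt \<gamma>"
    if "(\<Prod>i=1..n. S i) powr (1 / real n) \<ge> 1"
  proof -
    have "\<psi> \<ge> 0"
      using that unfolding \<psi>_def by (intro mult_nonneg_nonneg ln_ge_zero) auto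
    then have "\<epsilon> * \<psi> \<ge> 0"
      using \<open>\<epsilon> > 0\<close> by simp
    then show ?thesis
      using approx by (simp add: algebra_simps)
  qed
  ultimately show ?thesis
    unfolding \<psi>_def by blast
qed

end
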